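(* Let $n\ge2$ and $k\ge1$ be integers. For every real polynomial $f\in M_{n,k}$ with $\deg f\le 2k$, one has $f(1)/f_0\le\binom{n+k-1}{k}$. That is, the lower bound $\mathcal{M}(n,k)\ge\binom{n+k-1}{k}$ cannot be improved via the bound $\mathcal{M}(n,k)\ge f(1)/f_0$ (valid for $f\in M_{n,k}$) using any polynomial of degree at most $2k$.
   Context: For $n\ge 2$, let $P_i^{(n)}(t)$ be the normalized Gegenbauer polynomials: $P_0^{(n)}=1$, $P_1^{(n)}=t$, and $(i+n-2)P_{i+1}^{(n)}(t)=(2i+n-2)tP_i^{(n)}(t)-iP_{i-1}^{(n)}(t)$ for $i\ge1$. For a real polynomial $f$ of degree $m$, write $f(t)=\sum_{i=0}^m f_iP_i^{(n)}(t)$. Let $F_{n,k}$ be the set of $f$ with $f_0>0$ and $f_i\le0$ for $i=1,3,\dots,2k-1$ and for all $i\ge2k+1$. Let $M_{n,k}=\{f\in F_{n,k}: f(t)\ge0$ for all $t\in[-1,1]\}$. A $(k,k)$-design is a finite nonempty $C\subset\mathbb{S}^{n-1}$ with $\sum_{x,y\in C}P_{2i}^{(n)}(\langle x,y\rangle)=0$ for $i=1,\dots,k$. $\mathcal{M}(n,k)$ is the minimum cardinality of such a design. *)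

theory Defs
  imports "HOL-Computational_Algebra.Polynomial"
begin

fun gegen :: "nat \<Rightarrow> nat \<Rightarrow> real poly" where
  "gegen n 0 = 1"
| "gegen n (Suc 0) = [:0, 1:]"
| "gegen n (Suc (Suc i)) =
     smult (1 / (real (Suc i) + real n - 2))
       (smult (2 * real (Suc i) + real n - 2) ([:0, 1:] * gegen n (Suc i))
        - smult (real (Suc i)) (gegen n i))"

definition gegen_sum :: "nat \<Rightarrow> nat \<Rightarrow> (nat \<Rightarrow> real) \<Rightarrow> real poly" where
  "gegen_sum n m c = (\<Sum>i\<le>m. smult (c i) (gegen n i))"

definition in_F :: "nat \<Rightarrow> nat \<Rightarrow> nat \<Rightarrow> (nat \<Rightarrow> real) \<Rightarrow> bool" where
  "in_F n k m c \<longleftrightarrow> c 0 > 0 \<and>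
     (\<forall>i\<le>m. (odd i \<and> i \<le> 2*k - 1 \<longrightarrow> c i \<le> 0) \<and> (2*k + 1 \<le> i \<longrightarrow> c i \<le> 0))"

definition in_M :: "nat \<Rightarrow> nat \<Rightarrow> nat \<Rightarrow> (nat \<Rightarrow> real) \<Rightarrow> bool" where
  "in_M n k m c \<longleftrightarrow> in_F n k m c \<and> (\<forall>t\<in>{-1..1}. poly (gegen_sum n m c) t \<ge> 0)"

end

theory Submission
  imports Defs "HOL-Analysis.Convex_Euclidean_Space"
begin

(*
  Let mu_n be the probability measure on [-1, 1] with density proportional to (1 - t^2)^((n-3)/2).
  The P_i are orthogonal for mu_n, f_0 is the mu_n-integral of f, and the integral of P_i^2 is the
  reciprocal of the dimension of the spherical harmonics of degree i.

  Since the odd coefficients of f are nonpositive, f(1) <= f(-1), so f(1) is at most g(1) for the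
  even part g(t) = h(t^2) of f, where h >= 0 on [0, 1] and deg h <= k. A Lukacs-type decomposition
  writes h as a sum of q^2, s q^2, (1 - s) q^2 and s (1 - s) q^2 of degree at most k, so g is a sum
  of squares p^2 and of terms (1 - t^2) p^2, each p having the parity of a degree bound r <= k.
  The latter vanish at 1 and have nonnegative integral. For the former, Cauchy-Schwarz in the
  Gegenbauer basis gives p(1)^2 <= C(n+r-1, r) int p^2 dmu_n, because the dimensions of the
  harmonics of degree r, r - 2, ... add up to C(n+r-1, r), the dimension of the homogeneous
  polynomials of degree r. Summing, f(1) <= C(n+k-1, k) int g dmu_n = C(n+k-1, k) f_0.
*)

lemma gegen_recurrence:
  assumes "n \<ge> 2"
  shows "smult (real i + real n - 2) (gegen n (Suc i)) =
    smult (2 * real i + real n - 2) ([:0, 1:] * gegen n i) - smult (real i) (gegen n (i - 1))"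
proof (cases i)
  case (Suc j)
  then have "real i + real n - 2 \<noteq> 0" using assms by simp
  then show ?thesis using Suc by simp
qed (simp add: algebra_simps)

lemma poly_gegen_one: "n \<ge> 2 \<Longrightarrow> poly (gegen n i) 1 = 1"
  by (induction n i rule: gegen.induct) (auto simp: field_simps)

lemma poly_gegen_minus: "n \<ge> 2 \<Longrightarrow> poly (gegen n i) (- x) = (- 1) ^ i * poly (gegen n i) x"
  by (induction n i rule: gegen.induct) (auto simp: field_simps)

lemma degree_gegen_lead_coeff:
  assumes "n \<ge> 2"
  shows "degree (gegen n i) = i \<and> lead_coeff (gegen n i) > 0"
  using assms
proof (induction n i rule: gegen.induct)
  case (3 n i)
  define A where "A = smult (2 * real (Suc i) + real n - 2) ([:0, 1:] * gegen n (Suc i))"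
  define B where "B = smult (real (Suc i)) (gegen n i)"
  have IH: "degree (gegen n (Suc i)) = Suc i" "lead_coeff (gegen n (Suc i)) > 0"
    "degree (gegen n i) = i"
    using 3 by auto
  then have "gegen n (Suc i) \<noteq> 0" by auto
  then have A: "degree A = Suc (Suc i)" "lead_coeff A > 0"
    using IH 3(3) by (auto simp: A_def degree_mult_eq lead_coeff_mult)
  then have "degree B < degree A" using IH by (simp add: B_def)
  then have "degree (A - B) = Suc (Suc i)" "lead_coeff (A - B) > 0"
    using A degree_add_eq_right[of "- B" A] lead_coeff_add_le[of "- B" A] by simp_all
  moreover have "gegen n (Suc (Suc i)) = smult (1 / (real (Suc i) + real n - 2)) (A - B)"
    by (simp add: A_def B_def)
  ultimately show ?case using 3(3) by (simp add: lead_coeff_smult)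
qed simp_all

lemma degree_gegen [simp]: "n \<ge> 2 \<Longrightarrow> degree (gegen n i) = i"
  using degree_gegen_lead_coeff by blast

declare gegen.simps(3) [simp del]

lemma gegen_pderiv:
  assumes "n \<ge> 2"
  shows "[:1, 0, -1:] * pderiv (gegen n i) =
    smult (real i) (gegen n (i - 1) - [:0, 1:] * gegen n i)"
  using assms
proof (induction n i rule: gegen.induct)
  case (2 n)
  then show ?case by (simp add: pderiv_pCons) (simp add: poly_eq_iff coeff_pCons split: nat.split)
next
  case (3 n i)
  have rec2: "smult (real i + real n - 1) (gegen n (Suc (Suc i))) =
      smult (2 * real i + real n) ([:0, 1:] * gegen n (Suc i)) - smult (real i + 1) (gegen n i)"
    using gegen_recurrence[OF 3(3), of "Suc i"] by (simp add: algebra_simps)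
  have rec1: "smult (real i + real n - 2) (gegen n (Suc i)) =
      smult (2 * real i + real n - 2) ([:0, 1:] * gegen n i) - smult (real i) (gegen n (i - 1))"
    using gegen_recurrence[OF 3(3), of i] .
  have IH: "[:1, 0, -1:] * pderiv (gegen n (Suc i)) =
      smult (real i + 1) (gegen n i - [:0, 1:] * gegen n (Suc i))"
    "[:1, 0, -1:] * pderiv (gegen n i) = smult (real i) (gegen n (i - 1) - [:0, 1:] * gegen n i)"
    using 3 by (simp_all add: algebra_simps)
  show ?case
  proof (rule iffD1[OF poly_eq_poly_eq_iff], rule ext)
    fix x :: real
    have "(real i + real n - 1) * poly ([:1, 0, -1:] * pderiv (gegen n (Suc (Suc i)))) x =
        (real i + real n - 1) * poly (smult (real (Suc (Suc i)))
          (gegen n (Suc (Suc i) - 1) - [:0, 1:] * gegen n (Suc (Suc i)))) x"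
      using arg_cong[OF rec2, of "\<lambda>p. poly p x"] arg_cong[OF rec2, of "\<lambda>p. poly (pderiv p) x"]
        arg_cong[OF rec1, of "\<lambda>p. poly p x"] arg_cong[OF IH(1), of "\<lambda>p. poly p x"]
        arg_cong[OF IH(2), of "\<lambda>p. poly p x"]
      by (simp (no_asm_use) add: pderiv_smult pderiv_diff pderiv_mult pderiv_pCons) algebra
    moreover have "real i + real n - 1 \<noteq> 0" using 3(3) by simp
    ultimately show "poly ([:1, 0, -1:] * pderiv (gegen n (Suc (Suc i)))) x =
        poly (smult (real (Suc (Suc i)))
          (gegen n (Suc (Suc i) - 1) - [:0, 1:] * gegen n (Suc (Suc i)))) x"
      by simp
  qed
qed simp

text \<open>The moments of mu_n, the law of one coordinate of a uniform random point of the unit sphere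
  in R^n; the recursion is an integration by parts.\<close>
fun gegen_moment :: "nat \<Rightarrow> nat \<Rightarrow> real" where
  "gegen_moment n 0 = 1"
| "gegen_moment n (Suc 0) = 0"
| "gegen_moment n (Suc (Suc j)) = (real j + 1) / (real n + real j) * gegen_moment n j"

definition gegen_integral :: "nat \<Rightarrow> real poly \<Rightarrow> real" where
  "gegen_integral n p = (\<Sum>j\<le>degree p. coeff p j * gegen_moment n j)"

lemma gegen_moment_odd: "odd j \<Longrightarrow> gegen_moment n j = 0"
  by (induction n j rule: gegen_moment.induct) auto

lemma gegen_moment_Suc_Suc_eq:
  "n \<ge> 1 \<Longrightarrow> (real n + real j) * gegen_moment n (Suc (Suc j)) = (real j + 1) * gegen_moment n j"
  by simp

lemma gegen_moment_shift:
  "n \<ge> 1 \<Longrightarrow> (real n + real j) * gegen_moment (n + 2) j = real n * gegen_moment n j"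
  by (induction n j rule: gegen_moment.induct) (auto simp: field_simps)

lemma gegen_integral_eq_sum:
  assumes "degree p \<le> D"
  shows "gegen_integral n p = (\<Sum>j\<le>D. coeff p j * gegen_moment n j)"
  unfolding gegen_integral_def
  by (rule sum.mono_neutral_left) (use assms in \<open>auto simp: coeff_eq_0\<close>)

lemma gegen_integral_add: "gegen_integral n (p + q) = gegen_integral n p + gegen_integral n q"
  using degree_add_le[of p "max (degree p) (degree q)" q]
  by (simp add: gegen_integral_eq_sum[of _ "max (degree p) (degree q)"] sum.distrib algebra_simps)

lemma gegen_integral_smult: "gegen_integral n (smult c p) = c * gegen_integral n p"
  by (simp add: gegen_integral_eq_sum[of "smult c p" "degree p"] gegen_integral_def sum_distrib_left
      algebra_simps)

lemma gegen_integral_diff: "gegen_integral n (p - q) = gegen_integral n p - gegen_integral n q"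
  using gegen_integral_add[of n p "- q"] gegen_integral_smult[of n "- 1" q] by simp

lemma gegen_integral_0 [simp]: "gegen_integral n 0 = 0"
  and gegen_integral_1 [simp]: "gegen_integral n 1 = 1"
  by (simp_all add: gegen_integral_def)

lemma gegen_integral_sum: "gegen_integral n (\<Sum>i\<in>S. p i) = (\<Sum>i\<in>S. gegen_integral n (p i))"
  by (induction S rule: infinite_finite_induct) (auto simp: gegen_integral_add)

lemma gegen_integral_monom: "gegen_integral n (monom c j) = c * gegen_moment n j"
proof -
  have "gegen_integral n (monom c j) = (\<Sum>i\<le>j. if i = j then c * gegen_moment n i else 0)"
    unfolding gegen_integral_eq_sum[OF degree_monom_le] by (intro sum.cong) (auto simp: coeff_monom)
  then show ?thesis by simp
qed

lemma gegen_integral_by_monoms: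
  fixes A B :: "real poly \<Rightarrow> real poly"
  assumes "\<And>c i. gegen_integral n (A (monom c i)) = gegen_integral m (B (monom c i))"
    and "\<And>p q. A (p + q) = A p + A q" and "\<And>p q. B (p + q) = B p + B q"
  shows "gegen_integral n (A p) = gegen_integral m (B p)"
proof -
  have additive_sum: "C (\<Sum>i\<in>S. f i) = (\<Sum>i\<in>S. C (f i))"
    if "\<And>p q. C (p + q) = C p + C q" for C :: "real poly \<Rightarrow> real poly" and S :: "nat set" and f
  proof -
    have "C 0 = 0" using that[of 0 0] by simp
    then show ?thesis by (induction S rule: infinite_finite_induct) (auto simp: that)
  qed
  have "gegen_integral n (A p) = (\<Sum>i\<le>degree p. gegen_integral n (A (monom (coeff p i) i)))"
    by (subst (1) poly_as_sum_of_monoms[symmetric])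
      (simp add: additive_sum[of A, OF assms(2)] gegen_integral_sum)
  also have "\<dots> = gegen_integral m (B p)"
    by (subst (2) poly_as_sum_of_monoms[symmetric])
      (simp add: additive_sum[of B, OF assms(3)] gegen_integral_sum assms(1))
  finally show ?thesis .
qed

lemma X_mult_monom: "[:0, 1:] * monom (c :: real) i = monom c (Suc i)"
  by (simp add: monom_Suc)

lemma one_minus_X_sq_mult_monom:
  "[:1, 0, -1:] * monom (c :: real) i = monom c i - monom c (Suc (Suc i))"
  by (simp add: monom_Suc algebra_simps)

declare mult_pCons_left [simp del] mult_pCons_right [simp del]

lemma gegen_integral_pderiv:
  assumes "n \<ge> 1"
  shows "gegen_integral n ([:1, 0, -1:] * pderiv p) =
    (real n - 1) * gegen_integral n ([:0, 1:] * p)"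
proof -
  have "gegen_integral n ([:1, 0, -1:] * pderiv (monom c i)) =
      gegen_integral n (smult (real n - 1) ([:0, 1:] * monom c i))" for c i
  proof (cases i)
    case (Suc j)
    have "gegen_integral n ([:1, 0, -1:] * pderiv (monom c i)) =
        (real j + 1) * c * (gegen_moment n j - gegen_moment n (Suc (Suc j)))"
      unfolding Suc pderiv_monom one_minus_X_sq_mult_monom gegen_integral_diff gegen_integral_monom
      by (simp add: algebra_simps)
    also have "\<dots> = (real n - 1) * c * gegen_moment n (Suc (Suc j))"
      using gegen_moment_Suc_Suc_eq[OF assms, of j] by algebra
    finally show ?thesis
      unfolding Suc gegen_integral_smult X_mult_monom gegen_integral_monom by simp
  qed (simp add: pderiv_monom gegen_integral_smult gegen_integral_monom X_mult_monom)
  then have "gegen_integral n ([:1, 0, -1:] * pderiv p) =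
      gegen_integral n (smult (real n - 1) ([:0, 1:] * p))"
    by (rule gegen_integral_by_monoms[where A = "\<lambda>p. [:1, 0, -1:] * pderiv p"
          and B = "\<lambda>p. smult (real n - 1) ([:0, 1:] * p)"])
      (simp_all add: pderiv_add distrib_left distrib_right smult_add_right)
  then show ?thesis by (simp add: gegen_integral_smult)
qed

lemma gegen_integral_one_minus_X_sq:
  assumes "n \<ge> 1"
  shows "gegen_integral n ([:1, 0, -1:] * p) = (real n - 1) / real n * gegen_integral (n + 2) p"
proof -
  have "gegen_integral n ([:1, 0, -1:] * monom c i) =
      gegen_integral (n + 2) (smult ((real n - 1) / real n) (monom c i))" for c i
  proof -
    have pos: "real n > 0" "real n + real i > 0" "real n * (real n + real i) \<noteq> 0"
      using assms by auto
    have shift: "gegen_moment (n + 2) i = real n / (real n + real i) * gegen_moment n i"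
      using gegen_moment_shift[OF assms, of i] pos by (simp add: field_simps)
    have "gegen_integral n ([:1, 0, -1:] * monom c i) =
        c * (gegen_moment n i - gegen_moment n (Suc (Suc i)))"
      unfolding one_minus_X_sq_mult_monom gegen_integral_diff gegen_integral_monom
      by (simp add: right_diff_distrib)
    also have "\<dots> = (real n - 1) / real n * (c * gegen_moment (n + 2) i)"
      using pos unfolding shift by (simp add: field_simps)
    finally show ?thesis unfolding gegen_integral_smult gegen_integral_monom .
  qed
  then have "gegen_integral n ([:1, 0, -1:] * p) =
      gegen_integral (n + 2) (smult ((real n - 1) / real n) p)"
    by (rule gegen_integral_by_monoms[where A = "\<lambda>p. [:1, 0, -1:] * p"
          and B = "smult ((real n - 1) / real n)"]) (simp_all add: distrib_left smult_add_right)
  then show ?thesis by (simp add: gegen_integral_smult)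
qed

lemma coeff_even_odd_poly:
  fixes p :: "real poly"
  assumes "\<And>x. poly p (- x) = - poly p x" and "even j"
  shows "coeff p j = 0"
proof -
  have "p \<circ>\<^sub>p [:0, -1:] = - p"
    by (rule iffD1[OF poly_eq_poly_eq_iff]) (simp add: fun_eq_iff poly_pcompose assms(1))
  then have "(- 1) ^ j * coeff p j = - coeff p j"
    using coeff_pcompose_linear[of p "- 1" j] by simp
  then show ?thesis using assms(2) by simp
qed

lemma gegen_integral_odd:
  assumes "\<And>x. poly p (- x) = - poly p x"
  shows "gegen_integral n p = 0"
  unfolding gegen_integral_def
  by (rule sum.neutral)
    (metis coeff_even_odd_poly[OF assms] gegen_moment_odd mult_zero_left mult_zero_right)

lemma gegen_integral_gegen:
  assumes n: "n \<ge> 2" and "i \<ge> 1"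
  shows "gegen_integral n (gegen n i) = 0"
proof -
  have step: "(real j + real n - 1) * (real n + real j) * gegen_integral n (gegen n (Suc (Suc j))) =
      real j * (real j + 1) * gegen_integral n (gegen n j)" for j
  proof -
    have "(real j + real n - 1) * gegen_integral n (gegen n (Suc (Suc j))) =
        (2 * real j + real n) * gegen_integral n ([:0, 1:] * gegen n (Suc j))
          - (real j + 1) * gegen_integral n (gegen n j)"
      using arg_cong[OF gegen_recurrence[OF n, of "Suc j"], of "gegen_integral n"]
      by (simp add: gegen_integral_smult gegen_integral_diff algebra_simps)
    moreover have "(1 + real j) *
        (gegen_integral n (gegen n j) - gegen_integral n ([:0, 1:] * gegen n (Suc j))) =
        (real n - 1) * gegen_integral n ([:0, 1:] * gegen n (Suc j))"
      using gegen_integral_pderiv[of n "gegen n (Suc j)"] n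
      by (simp add: gegen_pderiv[OF n] gegen_integral_smult gegen_integral_diff)
    ultimately show ?thesis by algebra
  qed
  show ?thesis
    using \<open>i \<ge> 1\<close>
  proof (induction i rule: less_induct)
    case (less i)
    consider "i = 1" | j where "i = Suc (Suc j)"
      using less.prems by (metis One_nat_def Suc_le_D le_SucE le_zero_eq not0_implies_Suc)
    then show ?case
    proof cases
      case 1
      then show ?thesis
        using gegen_integral_monom[of n 1 1] by (simp add: monom_Suc monom_0 One_nat_def)
    next
      case (2 j)
      have "real j * (real j + 1) * gegen_integral n (gegen n j) = 0"
        using less.IH[of j] 2 by (cases "j = 0") auto
      then have "(real j + real n - 1) * (real n + real j) * gegen_integral n (gegen n i) = 0"
        using step[of j] 2 by simp
      moreover have "(real j + real n - 1) * (real n + real j) \<noteq> 0" using n by simp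
      ultimately show ?thesis by simp
    qed
  qed
qed

lemma gegen_integral_mult_gegen:
  assumes n: "n \<ge> 2" and "degree q < i"
  shows "gegen_integral n (q * gegen n i) = 0"
  using assms(2)
proof (induction q arbitrary: i rule: pCons_induct)
  case (pCons a q)
  have "i \<ge> 1" using pCons.prems by simp
  then have P_i: "gegen_integral n (gegen n i) = 0" by (rule gegen_integral_gegen[OF n])
  show ?case
  proof (cases "q = 0")
    case True
    then show ?thesis by (simp add: mult_pCons_left gegen_integral_smult P_i)
  next
    case False
    then have "degree q < i - 1" using pCons.prems by simp
    moreover have "smult (2 * real i + real n - 2) ([:0, 1:] * gegen n i) =
        smult (real i + real n - 2) (gegen n (Suc i)) + smult (real i) (gegen n (i - 1))"
      using gegen_recurrence[OF n, of i] by (metis eq_diff_eq)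
    ultimately have
      "gegen_integral n (q * smult (2 * real i + real n - 2) ([:0, 1:] * gegen n i)) = 0"
      using pCons.IH[of "Suc i"] pCons.IH[of "i - 1"]
      by (simp add: algebra_simps gegen_integral_add gegen_integral_smult)
    moreover have "2 * real i + real n - 2 \<noteq> 0" using \<open>i \<ge> 1\<close> n by simp
    ultimately have "gegen_integral n (q * ([:0, 1:] * gegen n i)) = 0"
      by (simp add: gegen_integral_smult)
    moreover have "pCons a q * gegen n i = smult a (gegen n i) + q * ([:0, 1:] * gegen n i)"
      by (simp add: mult_pCons_left mult_pCons_right)
    ultimately show ?thesis by (simp add: gegen_integral_add gegen_integral_smult P_i)
  qed
qed simp

lemma gegen_integral_gegen_mult_gegen:
  assumes "n \<ge> 2" and "i \<noteq> j"
  shows "gegen_integral n (gegen n i * gegen n j) = 0"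
proof (cases "i < j")
  case True
  then show ?thesis using gegen_integral_mult_gegen[OF assms(1), of "gegen n i" j] assms(1) by simp
next
  case False
  then show ?thesis
    using gegen_integral_mult_gegen[OF assms(1), of "gegen n j" i] assms by (simp add: mult.commute)
qed

definition gegen_sqnorm :: "nat \<Rightarrow> nat \<Rightarrow> real" where
  "gegen_sqnorm n i = gegen_integral n (gegen n i * gegen n i)"

lemma gegen_sqnorm_Suc:
  assumes n: "n \<ge> 2"
  shows "gegen_sqnorm n (Suc j) * (real j + real n - 2) * (2 * real j + real n) =
    (2 * real j + real n - 2) * (real j + 1) * gegen_sqnorm n j"
proof -
  define W where "W = gegen_integral n ([:0, 1:] * gegen n j * gegen n (Suc j))"
  have "(real j + real n - 2) * gegen_sqnorm n (Suc j) = (2 * real j + real n - 2) * W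
      - real j * gegen_integral n (gegen n (j - 1) * gegen n (Suc j))"
    using arg_cong[OF gegen_recurrence[OF n, of j], of "\<lambda>p. gegen_integral n (p * gegen n (Suc j))"]
    unfolding gegen_sqnorm_def W_def mult_smult_left left_diff_distrib gegen_integral_smult
      gegen_integral_diff
    by (simp add: algebra_simps)
  moreover have "(real j + real n - 1) * gegen_integral n (gegen n (Suc (Suc j)) * gegen n j) =
      (2 * real j + real n) * W - (real j + 1) * gegen_sqnorm n j"
    using arg_cong[OF gegen_recurrence[OF n, of "Suc j"], of "\<lambda>p. gegen_integral n (p * gegen n j)"]
    unfolding gegen_sqnorm_def W_def mult_smult_left left_diff_distrib gegen_integral_smult
      gegen_integral_diff
    by (simp add: algebra_simps)
  moreover have "gegen_integral n (gegen n (j - 1) * gegen n (Suc j)) = 0"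
    "gegen_integral n (gegen n (Suc (Suc j)) * gegen n j) = 0"
    by (simp_all add: gegen_integral_gegen_mult_gegen[OF n])
  ultimately show ?thesis by algebra
qed

definition hom_dim :: "nat \<Rightarrow> nat \<Rightarrow> real" where
  "hom_dim n r = real ((n + r - 1) choose r)"

text \<open>hom_dim n r is the dimension of the homogeneous polynomials of degree r in n variables, and
  harm_dim n i that of the spherical harmonics of degree i: multiplication by |x|^2 embeds the
  homogeneous polynomials of degree i - 2 into those of degree i with the harmonics as complement.\<close>
definition harm_dim :: "nat \<Rightarrow> nat \<Rightarrow> real" where
  "harm_dim n i = hom_dim n i - (if i \<ge> 2 then hom_dim n (i - 2) else 0)"

lemma hom_dim_0 [simp]: "hom_dim n 0 = 1"
  by (simp add: hom_dim_def)

lemma hom_dim_pos: "n \<ge> 1 \<Longrightarrow> hom_dim n r > 0"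
  by (simp add: hom_dim_def zero_less_binomial)

lemma hom_dim_Suc:
  assumes "n \<ge> 1"
  shows "(real r + 1) * hom_dim n (Suc r) = (real n + real r) * hom_dim n r"
proof -
  obtain m where m: "n = Suc m" using assms by (cases n) auto
  show ?thesis
    using arg_cong[OF Suc_times_binomial[of r "m + r"], of real] unfolding hom_dim_def m
    by (simp add: algebra_simps)
qed

lemma strict_mono_hom_dim:
  assumes "n \<ge> 2"
  shows "strict_mono (hom_dim n)"
  unfolding strict_mono_Suc_iff
proof
  fix r
  have "(real r + 1) * hom_dim n r < (real n + real r) * hom_dim n r"
    using assms hom_dim_pos[of n r] by (intro mult_strict_right_mono) auto
  then have "(real r + 1) * hom_dim n r < (real r + 1) * hom_dim n (Suc r)"
    using hom_dim_Suc[of n r] assms by simp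
  then show "hom_dim n r < hom_dim n (Suc r)" by simp
qed

lemma harm_dim_pos:
  assumes "n \<ge> 2"
  shows "harm_dim n i > 0"
  using strict_mono_hom_dim[OF assms] hom_dim_pos[of n i] assms
  by (auto simp: harm_dim_def strict_mono_less)

lemma harm_dim_Suc:
  assumes n: "n \<ge> 2" and "J \<ge> 1"
  shows "harm_dim n (Suc J) * (2 * real J + real n - 2) * (real J + 1) =
    harm_dim n J * (real J + real n - 2) * (2 * real J + real n)"
proof (cases "J = 1")
  case True
  have H1: "hom_dim n 1 = real n" using n by (simp add: hom_dim_def)
  then have "hom_dim n 2 = (real n + 1) * real n / 2"
    using hom_dim_Suc[of n 1] n by (simp add: numeral_2_eq_2)
  then have "harm_dim n 2 = (real n + 1) * real n / 2 - 1" "harm_dim n 1 = real n"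
    using H1 by (simp_all add: harm_dim_def)
  then show ?thesis unfolding True Suc_1 by (simp add: field_simps) algebra
next
  case False
  then obtain K where K: "J = Suc (Suc K)"
    using \<open>J \<ge> 1\<close> by (metis One_nat_def Suc_le_D le_SucE le_zero_eq not0_implies_Suc)
  have H: "(real r + 1) * hom_dim n (Suc r) = (real n + real r) * hom_dim n r" for r
    using hom_dim_Suc[of n r] n by simp
  from H[of K] H[of "Suc K"] H[of "Suc (Suc K)"] show ?thesis
    unfolding harm_dim_def K by simp algebra
qed

lemma sum_harm_dim_same_parity:
  assumes "n \<ge> 2"
  shows "(\<Sum>i\<in>{i. i \<le> r \<and> even (i + r)}. harm_dim n i) = hom_dim n r"
proof (induction r rule: less_induct)
  case (less r)
  consider "r = 0" | "r = 1" | s where "r = Suc (Suc s)"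
    by (metis One_nat_def not0_implies_Suc)
  then show ?case
  proof cases
    case 1
    then have "{i. i \<le> r \<and> even (i + r)} = {0}" by auto
    then show ?thesis using 1 by (simp add: harm_dim_def)
  next
    case 2
    then have "{i. i \<le> r \<and> even (i + r)} = {1}" by (auto simp: le_Suc_eq)
    then show ?thesis using 2 by (simp add: harm_dim_def)
  next
    case (3 s)
    then have "{i. i \<le> r \<and> even (i + r)} = insert r {i. i \<le> s \<and> even (i + s)}"
      by (auto simp: le_Suc_eq)
    then show ?thesis using less.IH[of s] 3 by (simp add: harm_dim_def)
  qed
qed

lemma gegen_sqnorm_harm_dim:
  assumes n: "n \<ge> 2"
  shows "gegen_sqnorm n i * harm_dim n i = 1"
proof (induction i)
  case 0
  then show ?case by (simp add: gegen_sqnorm_def harm_dim_def gegen_integral_def)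
next
  case (Suc J)
  show ?case
  proof (cases "J = 0")
    case True
    have "gegen_sqnorm n 1 = gegen_integral n (monom 1 2)"
      by (simp add: gegen_sqnorm_def monom_Suc monom_0 numeral_2_eq_2 mult_pCons_left)
    moreover have "harm_dim n 1 = real n" using n by (simp add: harm_dim_def hom_dim_def)
    ultimately show ?thesis
      using n unfolding True One_nat_def[symmetric]
      by (simp add: gegen_integral_monom numeral_2_eq_2)
  next
    case False
    then have "J \<ge> 1" by simp
    have pos: "(real J + real n - 2) * (2 * real J + real n) > 0" using False n by simp
    have "gegen_sqnorm n (Suc J) * harm_dim n (Suc J) *
        ((real J + real n - 2) * (2 * real J + real n)) =
        (real J + real n - 2) * (2 * real J + real n)"
      using gegen_sqnorm_Suc[OF n, of J] harm_dim_Suc[OF n \<open>J \<ge> 1\<close>] Suc.IH by algebra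
    then show ?thesis using pos by (metis mult_cancel_right2 less_irrefl)
  qed
qed

lemma gegen_sqnorm_pos: "n \<ge> 2 \<Longrightarrow> gegen_sqnorm n i > 0"
  using gegen_sqnorm_harm_dim[of n i] harm_dim_pos[of n i]
  by (metis zero_less_mult_pos2 zero_less_one)

lemma gegen_expansion:
  assumes n: "n \<ge> 2" and "degree p \<le> d"
  obtains a where "p = (\<Sum>i\<le>d. smult (a i) (gegen n i))"
  using assms(2)
proof (induction d arbitrary: p thesis)
  case 0
  then obtain c where "p = [:c:]" by (auto elim: degree_eq_zeroE)
  then show ?case by (intro "0.prems"(1)[of "\<lambda>_. c"]) simp
next
  case (Suc d)
  have P: "degree (gegen n (Suc d)) = Suc d" "lead_coeff (gegen n (Suc d)) > 0"
    using degree_gegen_lead_coeff[OF n, of "Suc d"] by auto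
  define c where "c = coeff p (Suc d) / lead_coeff (gegen n (Suc d))"
  define q where "q = p - smult c (gegen n (Suc d))"
  have "degree q \<le> Suc d" "coeff q (Suc d) = 0"
    using P Suc.prems(2)
    by (auto simp: q_def c_def intro: degree_diff_le order.trans[OF degree_smult_le])
  then have "degree q \<le> d"
    by (metis Zero_not_Suc degree_0 leading_coeff_0_iff le_SucE)
  then obtain a where "q = (\<Sum>i\<le>d. smult (a i) (gegen n i))" using Suc.IH by blast
  then have "p = (\<Sum>i\<le>Suc d. smult ((a(Suc d := c)) i) (gegen n i))"
    by (simp add: q_def algebra_simps)
  then show ?case by (rule Suc.prems(1))
qed

lemma gegen_integral_gegen_mult_expansion:
  assumes n: "n \<ge> 2" and p: "p = (\<Sum>i\<le>d. smult (a i) (gegen n i))" and "j \<le> d"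
  shows "gegen_integral n (gegen n j * p) = a j * gegen_sqnorm n j"
proof -
  have "gegen_integral n (gegen n j * p) = (\<Sum>i\<le>d. if i = j then a j * gegen_sqnorm n j else 0)"
    unfolding p sum_distrib_left gegen_integral_sum
    by (intro sum.cong)
      (auto simp: gegen_integral_smult gegen_sqnorm_def gegen_integral_gegen_mult_gegen[OF n])
  then show ?thesis using \<open>j \<le> d\<close> by simp
qed

lemma gegen_integral_expansion_sq:
  assumes n: "n \<ge> 2" and p: "p = (\<Sum>i\<le>d. smult (a i) (gegen n i))"
  shows "gegen_integral n (p * p) = (\<Sum>i\<le>d. (a i)\<^sup>2 * gegen_sqnorm n i)"
proof -
  have "gegen_integral n (p * p) = (\<Sum>i\<le>d. a i * gegen_integral n (gegen n i * p))"
    by (subst (1) p) (simp add: sum_distrib_right gegen_integral_sum gegen_integral_smult)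
  also have "\<dots> = (\<Sum>i\<le>d. (a i)\<^sup>2 * gegen_sqnorm n i)"
    by (intro sum.cong refl)
      (simp add: gegen_integral_gegen_mult_expansion[OF n p] power2_eq_square)
  finally show ?thesis .
qed

lemma gegen_integral_sq_nonneg:
  assumes n: "n \<ge> 2"
  shows "gegen_integral n (p * p) \<ge> 0"
proof -
  obtain a where "p = (\<Sum>i\<le>degree p. smult (a i) (gegen n i))"
    using gegen_expansion[OF n order.refl] .
  then show ?thesis
    using gegen_sqnorm_pos[OF n]
    by (simp add: gegen_integral_expansion_sq[OF n] sum_nonneg less_imp_le)
qed

lemma gegen_integral_one_minus_X_sq_sq_nonneg:
  assumes n: "n \<ge> 2"
  shows "gegen_integral n ([:1, 0, -1:] * (p * p)) \<ge> 0"
  using gegen_integral_sq_nonneg[of "n + 2" p] n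
  by (simp add: gegen_integral_one_minus_X_sq)

lemma christoffel_bound:
  assumes n: "n \<ge> 2"
    and parity: "\<And>x. poly p (- x) = (- 1) ^ r * poly p x"
    and "degree p \<le> r"
  shows "(poly p 1)\<^sup>2 \<le> hom_dim n r * gegen_integral n (p * p)"
proof -
  obtain a where p: "p = (\<Sum>i\<le>r. smult (a i) (gegen n i))"
    using gegen_expansion[OF n \<open>degree p \<le> r\<close>] .
  define S where "S = {i. i \<le> r \<and> even (i + r)}"
  have S: "S \<subseteq> {..r}" "finite S" unfolding S_def by auto
  have a_zero: "a i = 0" if "i \<le> r" "i \<notin> S" for i
  proof -
    have "gegen_integral n (gegen n i * p) = 0"
      by (rule gegen_integral_odd)
        (use that in \<open>auto simp: S_def parity poly_gegen_minus[OF n] power_add[symmetric]\<close>)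
    then show ?thesis
      using gegen_integral_gegen_mult_expansion[OF n p that(1)] gegen_sqnorm_pos[OF n, of i] by simp
  qed
  have "(poly p 1)\<^sup>2 = (\<Sum>i\<in>S. (a i * sqrt (gegen_sqnorm n i)) * (1 / sqrt (gegen_sqnorm n i)))\<^sup>2"
  proof -
    have "poly p 1 = (\<Sum>i\<in>S. a i)"
      unfolding p poly_sum using S a_zero
      by (simp add: poly_gegen_one[OF n] sum.mono_neutral_right[of "{..r}" S])
    then show ?thesis using gegen_sqnorm_pos[OF n] by (simp add: less_imp_neq[symmetric])
  qed
  also have "\<dots> \<le> (\<Sum>i\<in>S. (a i * sqrt (gegen_sqnorm n i))\<^sup>2) *
      (\<Sum>i\<in>S. (1 / sqrt (gegen_sqnorm n i))\<^sup>2)"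
    by (rule Cauchy_Schwarz_ineq_sum)
  also have "(\<Sum>i\<in>S. (a i * sqrt (gegen_sqnorm n i))\<^sup>2) = gegen_integral n (p * p)"
    unfolding gegen_integral_expansion_sq[OF n p] using S a_zero gegen_sqnorm_pos[OF n]
    by (simp add: power_mult_distrib less_imp_le sum.mono_neutral_right[of "{..r}" S])
  also have "(\<Sum>i\<in>S. (1 / sqrt (gegen_sqnorm n i))\<^sup>2) = (\<Sum>i\<in>S. harm_dim n i)"
  proof (intro sum.cong refl)
    fix i
    show "(1 / sqrt (gegen_sqnorm n i))\<^sup>2 = harm_dim n i"
      using gegen_sqnorm_harm_dim[OF n, of i] gegen_sqnorm_pos[OF n, of i]
      by (simp add: power_divide field_simps)
  qed
  also have "\<dots> = hom_dim n r"
    unfolding S_def by (rule sum_harm_dim_same_parity[OF n])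
  finally show ?thesis by (simp add: mult.commute)
qed

lemma christoffel_bound_mono:
  assumes n: "n \<ge> 2"
    and "\<And>x. poly p (- x) = (- 1) ^ r * poly p x" and "degree p \<le> r" and "r \<le> k"
  shows "(poly p 1)\<^sup>2 \<le> hom_dim n k * gegen_integral n (p * p)"
proof -
  have "(poly p 1)\<^sup>2 \<le> hom_dim n r * gegen_integral n (p * p)"
    by (rule christoffel_bound[OF n assms(2,3)])
  also have "\<dots> \<le> hom_dim n k * gegen_integral n (p * p)"
    using strict_mono_hom_dim[OF n] \<open>r \<le> k\<close> gegen_integral_sq_nonneg[OF n]
    by (intro mult_right_mono) (auto simp: strict_mono_less_eq)
  finally show ?thesis .
qed

inductive interval_sos :: "nat \<Rightarrow> real poly \<Rightarrow> bool" for k where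
  sos_zero: "interval_sos k 0"
| sos_add: "interval_sos k a \<Longrightarrow> interval_sos k b \<Longrightarrow> interval_sos k (a + b)"
| sos_square: "2 * degree q \<le> k \<Longrightarrow> interval_sos k (q * q)"
| sos_X_square: "2 * degree q + 1 \<le> k \<Longrightarrow> interval_sos k ([:0, 1:] * (q * q))"
| sos_1mX_square: "2 * degree q + 1 \<le> k \<Longrightarrow> interval_sos k ([:1, -1:] * (q * q))"
| sos_X_1mX_square: "2 * degree q + 2 \<le> k \<Longrightarrow> interval_sos k ([:0, 1:] * ([:1, -1:] * (q * q)))"

lemma interval_sos_mono: "interval_sos k h \<Longrightarrow> k \<le> k' \<Longrightarrow> interval_sos k' h"
  by (induction rule: interval_sos.induct) (auto intro: interval_sos.intros)

lemma interval_sos_const: "c \<ge> 0 \<Longrightarrow> interval_sos k [:c:]"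
  using sos_square[of "[:sqrt c:]" k] by (simp add: mult_pCons_left)

lemma degree_linear_mult_le: "degree ([:a, b:] * q) \<le> Suc (degree (q :: real poly))"
  using degree_mult_le[of "[:a, b:]" q] by (cases "b = 0") auto

lemma interval_sos_mult_X: "interval_sos k h \<Longrightarrow> interval_sos (Suc k) ([:0, 1:] * h)"
proof (induction rule: interval_sos.induct)
  case (sos_X_square q)
  have e: "[:0, 1:] * ([:0, 1:] * (q * q)) = ([:0, 1:] * q) * ([:0, 1:] * q)"
    by (simp only: ac_simps)
  show ?case
    unfolding e by (rule interval_sos.sos_square)
      (use sos_X_square degree_linear_mult_le[of 0 1 q] in simp)
next
  case (sos_X_1mX_square q)
  have e: "[:0, 1:] * ([:0, 1:] * ([:1, -1:] * (q * q))) =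
      [:1, -1:] * (([:0, 1:] * q) * ([:0, 1:] * q))"
    by (simp only: ac_simps)
  show ?case
    unfolding e by (rule interval_sos.sos_1mX_square)
      (use sos_X_1mX_square degree_linear_mult_le[of 0 1 q] in simp)
qed (auto simp: distrib_left intro: interval_sos.intros)

lemma interval_sos_mult_1mX: "interval_sos k h \<Longrightarrow> interval_sos (Suc k) ([:1, -1:] * h)"
proof (induction rule: interval_sos.induct)
  case (sos_X_square q)
  have e: "[:1, -1:] * ([:0, 1:] * (q * q)) = [:0, 1:] * ([:1, -1:] * (q * q))"
    by (simp only: ac_simps)
  show ?case
    unfolding e by (rule interval_sos.sos_X_1mX_square) (use sos_X_square in simp)
next
  case (sos_1mX_square q)
  have e: "[:1, -1:] * ([:1, -1:] * (q * q)) = ([:1, -1:] * q) * ([:1, -1:] * q)"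
    by (simp only: ac_simps)
  show ?case
    unfolding e by (rule interval_sos.sos_square)
      (use sos_1mX_square degree_linear_mult_le[of 1 "-1" q] in simp)
next
  case (sos_X_1mX_square q)
  have e: "[:1, -1:] * ([:0, 1:] * ([:1, -1:] * (q * q))) =
      [:0, 1:] * (([:1, -1:] * q) * ([:1, -1:] * q))"
    by (simp only: ac_simps)
  show ?case
    unfolding e by (rule interval_sos.sos_X_square)
      (use sos_X_1mX_square degree_linear_mult_le[of 1 "-1" q] in simp)
qed (auto simp: distrib_left intro: interval_sos.intros)

lemma interval_sos_mult_square:
  assumes "interval_sos k h"
  shows "interval_sos (k + 2 * degree g) (g * g * h)"
  using assms
proof (induction rule: interval_sos.induct)
  case (sos_square q)
  have e: "g * g * (q * q) = (g * q) * (g * q)"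
    by (simp only: ac_simps)
  show ?case
    unfolding e by (rule interval_sos.sos_square)
      (use sos_square.hyps degree_mult_le[of g q] in simp)
next
  case (sos_X_square q)
  have e: "g * g * ([:0, 1:] * (q * q)) = [:0, 1:] * ((g * q) * (g * q))"
    by (simp only: ac_simps)
  show ?case
    unfolding e by (rule interval_sos.sos_X_square)
      (use sos_X_square.hyps degree_mult_le[of g q] in simp)
next
  case (sos_1mX_square q)
  have e: "g * g * ([:1, -1:] * (q * q)) = [:1, -1:] * ((g * q) * (g * q))"
    by (simp only: ac_simps)
  show ?case
    unfolding e by (rule interval_sos.sos_1mX_square)
      (use sos_1mX_square.hyps degree_mult_le[of g q] in simp)
next
  case (sos_X_1mX_square q)
  have e: "g * g * ([:0, 1:] * ([:1, -1:] * (q * q))) =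
      [:0, 1:] * ([:1, -1:] * ((g * q) * (g * q)))"
    by (simp only: ac_simps)
  show ?case
    unfolding e by (rule interval_sos.sos_X_1mX_square)
      (use sos_X_1mX_square.hyps degree_mult_le[of g q] in simp)
qed (auto simp: distrib_left intro: interval_sos.intros)

lemma poly_nonneg_closed_interval:
  fixes p :: "real poly"
  assumes "a < b" and "\<And>s. a < s \<Longrightarrow> s < b \<Longrightarrow> poly p s \<ge> 0" and "s \<in> {a..b}"
  shows "poly p s \<ge> 0"
  using continuous_ge_on_Ioo[of a b "poly p" 0 s] continuous_on_poly[OF continuous_on_id] assms
  by auto

lemma nonneg_poly_interior_root:
  fixes h :: "real poly"
  assumes nonneg: "\<forall>s\<in>{0..1}. poly h s \<ge> 0" and r: "0 < r" "r < 1" "poly h r = 0"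
  obtains g where "h = [:-r, 1:] * [:-r, 1:] * g" "\<forall>s\<in>{0..1}. poly g s \<ge> 0"
proof -
  obtain g where g: "h = [:-r, 1:] * g" using r(3) poly_eq_0_iff_dvd by blast
  have sign: "0 \<le> (s - r) * poly g s" if "s \<in> {0..1}" for s
    using nonneg that by (simp add: g)
  have right: "poly g s \<ge> 0" if "r < s" "s < 1" for s
    using sign[of s] that r by (simp add: zero_le_mult_iff)
  have left: "poly (- g) s \<ge> 0" if "0 < s" "s < r" for s
    using sign[of s] that r by (simp add: zero_le_mult_iff)
  have "poly g r \<ge> 0" "poly (- g) r \<ge> 0"
    using poly_nonneg_closed_interval[of r 1 g r] poly_nonneg_closed_interval[of 0 r "- g" r] r
      right left
    by auto
  then obtain g' where g': "g = [:-r, 1:] * g'"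
    by (metis dvdE poly_eq_0_iff_dvd neg_0_le_iff_le order_antisym poly_minus)
  have off_r: "poly g' s \<ge> 0" if "s \<in> {0..1}" "s \<noteq> r" for s
  proof -
    have "0 \<le> (s - r) * ((s - r) * poly g' s)"
      using sign[OF that(1)] by (simp add: g' algebra_simps)
    moreover have "(s - r) * (s - r) > 0" using that(2) by (auto simp: zero_less_mult_iff)
    ultimately show ?thesis by (metis mult.assoc zero_le_mult_iff not_le)
  qed
  have "poly g' s \<ge> 0" if "s \<in> {0..1}" for s
  proof (cases "s \<le> r")
    case True
    show ?thesis
      by (rule poly_nonneg_closed_interval[of 0 r]) (use r that True in \<open>auto intro: off_r\<close>)
  next
    case False
    show ?thesis
      by (rule poly_nonneg_closed_interval[of r 1]) (use r that False in \<open>auto intro: off_r\<close>)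
  qed
  then show ?thesis using that g g' by (simp add: mult.assoc)
qed

lemma nonneg_poly_root_cases:
  fixes h :: "real poly"
  assumes nonneg: "\<forall>s\<in>{0..1}. poly h s \<ge> 0" and r: "r \<in> {0..1}" "poly h r = 0"
  obtains (left) g where "h = [:0, 1:] * g" "\<forall>s\<in>{0..1}. poly g s \<ge> 0"
    | (right) g where "h = [:1, -1:] * g" "\<forall>s\<in>{0..1}. poly g s \<ge> 0"
    | (double) g where "h = [:-r, 1:] * [:-r, 1:] * g" "\<forall>s\<in>{0..1}. poly g s \<ge> 0"
proof -
  obtain g where g: "h = [:-r, 1:] * g" using r(2) poly_eq_0_iff_dvd by blast
  have sign: "0 \<le> (s - r) * poly g s" if "s \<in> {0..1}" for s
    using nonneg that by (simp add: g)
  consider "r = 0" | "r = 1" | "0 < r" "r < 1" using r(1) by fastforce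
  then show ?thesis
  proof cases
    case 1
    have "poly g s \<ge> 0" if "0 < s" "s < 1" for s
      using sign[of s] that 1 by (simp add: zero_le_mult_iff)
    then have "poly g s \<ge> 0" if "s \<in> {0..1}" for s
      using poly_nonneg_closed_interval[of 0 1 g s] that by simp
    then show ?thesis using left g 1 by simp
  next
    case 2
    have "poly (- g) s \<ge> 0" if "0 < s" "s < 1" for s
      using sign[of s] that 2 by (simp add: zero_le_mult_iff)
    then have "poly (- g) s \<ge> 0" if "s \<in> {0..1}" for s
      using poly_nonneg_closed_interval[of 0 1 "- g" s] that by simp
    moreover have "h = [:1, -1:] * - g" using g 2 by (simp add: mult_pCons_left)
    ultimately show ?thesis using right by blast
  next
    case 3
    then show ?thesis using nonneg_poly_interior_root[OF nonneg _ _ r(2)] double by blast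
  qed
qed

lemma nonneg_poly_shift_minimum:
  fixes h :: "real poly"
  assumes "\<forall>s\<in>{0..1}. poly h s \<ge> 0" and "degree h \<noteq> 0"
  obtains c h' r where "h = [:c:] + h'" "c \<ge> 0" "\<forall>s\<in>{0..1}. poly h' s \<ge> 0"
    "r \<in> {0..1}" "poly h' r = 0" "degree h' = degree h"
proof -
  obtain r where r: "r \<in> {0..1}" "\<forall>s\<in>{0..1}. poly h r \<le> poly h s"
    using continuous_attains_inf[OF compact_Icc _ continuous_on_poly[OF continuous_on_id], of 0 1 h]
    by auto
  have "degree (h - [:poly h r:]) = degree h"
    unfolding diff_conv_add_uminus by (rule degree_add_eq_left) (use assms(2) in simp)
  then show ?thesis
    using that[of "poly h r" "h - [:poly h r:]" r] r assms(1) by auto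
qed

lemma interval_sos_of_nonneg:
  fixes h :: "real poly"
  assumes "\<forall>s\<in>{0..1}. poly h s \<ge> 0"
  shows "interval_sos (degree h) h"
  using assms
proof (induction "degree h" arbitrary: h rule: less_induct)
  case less
  have IH: "interval_sos (degree g) g"
    if "degree g < degree h" "\<forall>s\<in>{0..1}. poly g s \<ge> 0" for g
    using less.hyps that by blast
  show ?case
  proof (cases "degree h = 0")
    case True
    then obtain c where "h = [:c:]" by (auto elim: degree_eq_zeroE)
    then show ?thesis using less.prems interval_sos_const[of c] by auto
  next
    case False
    obtain c h' r where h: "h = [:c:] + h'" "c \<ge> 0" and h': "\<forall>s\<in>{0..1}. poly h' s \<ge> 0"
      "r \<in> {0..1}" "poly h' r = 0" "degree h' = degree h"
      using nonneg_poly_shift_minimum[OF less.prems False] by blast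
    then have "h' \<noteq> 0" using False by auto
    from h'(1-3) have "interval_sos (degree h) h'"
    proof (cases rule: nonneg_poly_root_cases)
      case (left g)
      then have "degree h = Suc (degree g)"
        using \<open>h' \<noteq> 0\<close> h'(4) by (auto simp: degree_mult_eq)
      then show ?thesis using interval_sos_mult_X[OF IH[of g]] left by simp
    next
      case (right g)
      then have "degree h = Suc (degree g)"
        using \<open>h' \<noteq> 0\<close> h'(4) by (auto simp: degree_mult_eq)
      then show ?thesis using interval_sos_mult_1mX[OF IH[of g]] right by simp
    next
      case (double g)
      then have "degree h = degree g + 2 * degree [:-r, 1:]"
        using \<open>h' \<noteq> 0\<close> h'(4) by (auto simp: degree_mult_eq)
      then show ?thesis
        using interval_sos_mult_square[OF IH[of g], of "[:-r, 1:]"] double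
        by (simp add: mult.commute)
    qed
    then show ?thesis using sos_add[OF interval_sos_const[OF h(2)]] h(1) by simp
  qed
qed

lemma interval_sos_bound:
  assumes n: "n \<ge> 2" and "interval_sos k h"
  shows "poly h 1 \<le> hom_dim n k * gegen_integral n (h \<circ>\<^sub>p [:0, 0, 1:])"
  using assms(2)
proof (induction rule: interval_sos.induct)
  have weighted: "0 \<le> hom_dim n k * gegen_integral n ([:1, 0, -1:] * (p * p))" for p
    using hom_dim_pos[of n k] n gegen_integral_one_minus_X_sq_sq_nonneg[OF n, of p] by simp
  {
    case (sos_square q)
    have "(q * q) \<circ>\<^sub>p [:0, 0, 1:] = (q \<circ>\<^sub>p [:0, 0, 1:]) * (q \<circ>\<^sub>p [:0, 0, 1:])"
      by (simp add: pcompose_mult)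
    then show ?case
      using christoffel_bound_mono[OF n, of "q \<circ>\<^sub>p [:0, 0, 1:]" "2 * degree q"] sos_square
      by (simp add: poly_pcompose degree_pcompose power2_eq_square)
  next
    case (sos_X_square q)
    define p where "p = [:0, 1:] * (q \<circ>\<^sub>p [:0, 0, 1:])"
    have "([:0, 1:] * (q * q)) \<circ>\<^sub>p [:0, 0, 1:] = p * p"
      by (rule iffD1[OF poly_eq_poly_eq_iff])
        (simp add: fun_eq_iff p_def poly_pcompose algebra_simps)
    moreover have "degree p \<le> 2 * degree q + 1"
      using degree_linear_mult_le[of 0 1 "q \<circ>\<^sub>p [:0, 0, 1:]"] by (simp add: p_def degree_pcompose)
    ultimately show ?case
      using christoffel_bound_mono[OF n, of p "2 * degree q + 1"] sos_X_square
      by (simp add: p_def poly_pcompose power2_eq_square)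
  next
    case (sos_1mX_square q)
    have "([:1, -1:] * (q * q)) \<circ>\<^sub>p [:0, 0, 1:] =
        [:1, 0, -1:] * ((q \<circ>\<^sub>p [:0, 0, 1:]) * (q \<circ>\<^sub>p [:0, 0, 1:]))"
      by (rule iffD1[OF poly_eq_poly_eq_iff]) (simp add: fun_eq_iff poly_pcompose algebra_simps)
    then show ?case using weighted by simp
  next
    case (sos_X_1mX_square q)
    have "([:0, 1:] * ([:1, -1:] * (q * q))) \<circ>\<^sub>p [:0, 0, 1:] =
        [:1, 0, -1:] * (([:0, 1:] * (q \<circ>\<^sub>p [:0, 0, 1:])) * ([:0, 1:] * (q \<circ>\<^sub>p [:0, 0, 1:])))"
      by (rule iffD1[OF poly_eq_poly_eq_iff]) (simp add: fun_eq_iff poly_pcompose algebra_simps)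
    then show ?case using weighted by simp
  }
qed (simp_all add: pcompose_add gegen_integral_add distrib_left)

lemma sum_even_part:
  fixes x :: real
  shows "(\<Sum>i\<le>2 * K. a i * (x ^ i + (- x) ^ i)) = 2 * (\<Sum>j\<le>K. a (2 * j) * x ^ (2 * j))"
proof (induction K)
  case (Suc K)
  have "2 * Suc K = Suc (Suc (2 * K))" by simp
  then show ?case using Suc by (simp add: algebra_simps)
qed simp

lemma even_part_poly:
  fixes f :: "real poly"
  assumes "degree f \<le> 2 * k"
  shows "\<exists>h. degree h \<le> k \<and> (\<forall>x. poly h (x\<^sup>2) = (poly f x + poly f (- x)) / 2)"
proof -
  define h where "h = (\<Sum>j\<le>k. monom (coeff f (2 * j)) j)"
  have "degree h \<le> k"
    unfolding h_def by (rule degree_sum_le) (auto intro: order.trans[OF degree_monom_le])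
  moreover have "poly h (x\<^sup>2) = (poly f x + poly f (- x)) / 2" for x
  proof -
    have "poly f y = (\<Sum>i\<le>2 * k. coeff f i * y ^ i)" for y
      unfolding poly_altdef by (rule sum.mono_neutral_left) (use assms in \<open>auto simp: coeff_eq_0\<close>)
    then show ?thesis
      using sum_even_part[where a = "coeff f" and K = k and x = x]
      by (simp add: h_def poly_sum poly_monom sum.distrib algebra_simps flip: power_mult)
  qed
  ultimately show ?thesis by blast
qed

lemma even_part_bound:
  fixes f :: "real poly"
  assumes n: "n \<ge> 2" and "degree f \<le> 2 * k" and nonneg: "\<forall>t\<in>{-1..1}. poly f t \<ge> 0"
  shows "(poly f 1 + poly f (- 1)) / 2 \<le> hom_dim n k * gegen_integral n f"
proof -
  obtain h where h: "degree h \<le> k" "\<And>x. poly h (x\<^sup>2) = (poly f x + poly f (- x)) / 2"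
    using even_part_poly[OF assms(2)] by blast
  have "poly h s \<ge> 0" if "s \<in> {0..1}" for s
  proof -
    have "0 \<le> sqrt s" "sqrt s \<le> 1" using that by auto
    then have "sqrt s \<in> {-1..1}" "- sqrt s \<in> {-1..1}" unfolding atLeastAtMost_iff by linarith+
    then have "poly f (sqrt s) \<ge> 0" "poly f (- sqrt s) \<ge> 0" using nonneg by blast+
    then show ?thesis using h(2)[of "sqrt s"] that by simp
  qed
  then have "interval_sos k h"
    using interval_sos_of_nonneg interval_sos_mono h(1) by blast
  then have "poly h 1 \<le> hom_dim n k * gegen_integral n (h \<circ>\<^sub>p [:0, 0, 1:])"
    by (rule interval_sos_bound[OF n])
  moreover have "gegen_integral n (f - h \<circ>\<^sub>p [:0, 0, 1:]) = 0"
    by (rule gegen_integral_odd)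
      (use h(2) in \<open>simp add: poly_pcompose power2_eq_square[symmetric] field_simps\<close>)
  ultimately show ?thesis using h(2)[of 1] by (simp add: gegen_integral_diff)
qed

lemma gegen_integral_gegen_sum:
  assumes "n \<ge> 2"
  shows "gegen_integral n (gegen_sum n m c) = c 0"
proof -
  have "gegen_integral n (gegen_sum n m c) = (\<Sum>i\<le>m. if i = 0 then c 0 else 0)"
    unfolding gegen_sum_def gegen_integral_sum
    by (intro sum.cong) (auto simp: gegen_integral_smult gegen_integral_gegen[OF assms])
  then show ?thesis by simp
qed

lemma in_F_poly_one_le_poly_minus_one:
  assumes "n \<ge> 2" and "in_F n k m c"
  shows "poly (gegen_sum n m c) 1 \<le> poly (gegen_sum n m c) (- 1)"
proof -
  have "poly (gegen_sum n m c) 1 - poly (gegen_sum n m c) (- 1) = (\<Sum>i\<le>m. c i * (1 - (- 1) ^ i))"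
    by (simp add: gegen_sum_def poly_sum poly_gegen_one[OF assms(1)] poly_gegen_minus[OF assms(1)]
        sum_subtractf algebra_simps)
  also have "\<dots> \<le> 0"
  proof (rule sum_nonpos)
    fix i assume "i \<in> {..m}"
    moreover have "i \<le> 2 * k - 1 \<or> 2 * k + 1 \<le> i" if "odd i" using that by presburger
    ultimately show "c i * (1 - (- 1) ^ i) \<le> 0"
      using assms(2) by (cases "even i") (auto simp: in_F_def)
  qed
  finally show ?thesis by simp
qed

theorem mainTheorem4:
  fixes n k m :: nat and c :: "nat \<Rightarrow> real"
  assumes "n \<ge> 2" and "k \<ge> 1"
    and "in_M n k m c"
    and "degree (gegen_sum n m c) \<le> 2 * k"
  shows "poly (gegen_sum n m c) 1 / c 0 \<le> real ((n + k - 1) choose k)"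
proof -
  let ?f = "gegen_sum n m c"
  have F: "in_F n k m c" and nonneg: "\<forall>t\<in>{-1..1}. poly ?f t \<ge> 0"
    using assms(3) by (auto simp: in_M_def)
  have "poly ?f 1 \<le> (poly ?f 1 + poly ?f (- 1)) / 2"
    using in_F_poly_one_le_poly_minus_one[OF assms(1) F] by simp
  also have "\<dots> \<le> hom_dim n k * c 0"
    using even_part_bound[OF assms(1,4) nonneg] by (simp add: gegen_integral_gegen_sum[OF assms(1)])
  finally show ?thesis
    using F by (simp add: in_F_def pos_divide_le_eq hom_dim_def)
qed

end
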